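(* For every $\gamma\in[0,1]$, the Equal Filling Till Threshold (EFTT) algorithm with threshold $\gamma$ (described in the context) is $(1-e^{-\gamma})$-CEF, i.e., on every instance the fractional matching $X$ it outputs satisfies $V_i(X)\ge (1-e^{-\gamma})\,V_i^*(y_j(X))$ for all classes $i,j$.
   Context: Online class matching (divisible setting): an instance is a bipartite graph $G=(N,M,E)$ with known agents $N$, items $M$, $E\subseteq M\times N$ ($a$ likes $o$ iff $(o,a)\in E$); agents are partitioned into $k$ known classes $N_1,\dots,N_k$. Items arrive one at a time in adversarial order; upon arrival of $o$ its set of liking agents is revealed and fractions of $o$ must be irrevocably assigned to agents liking it. A fractional matching is $X=(x_{o,a})\in[0,1]^{M\times N}$ supported on $E$ with $\sum_a x_{o,a}\le1$ for each item and $\sum_o x_{o,a}\le 1$ for each agent; the degree of an agent is $\sum_o x_{o,a}$; saturated means degree $1$. $V_i(X)=\sum_{a\in N_i}\sum_o x_{o,a}$. For class $j$, $y_j(X)\in[0,1]^M$ has $y_j(X)_o=\sum_{a\in N_j}x_{o,a}$. For $y\in[0,1]^M$, $V_i^*(y)$ is the maximum size of a fractional matching using edges of $E$ between $N_i$ and $M$ with degree at most $y_o$ at each item $o$ and at most $1$ at each agent. EFTT with threshold $\gamma$: the matching is increased continuously (water-filling). Upon arrival of item $o$: Phase I: let $Z_\gamma$ be the set of classes containing at least one agent that likes $o$ and has current degree less than $\gamma$. While $Z_\gamma\neq\emptyset$ and $o$ is not fully assigned, continuously assign mass of $o$, splitting it equally among the classes in $Z_\gamma$; within each class $i\in Z_\gamma$,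 the mass goes to the agent(s) of class $i$ liking $o$ with minimum current degree; a class is removed from $Z_\gamma$ once it no longer has an agent liking $o$ with degree less than $\gamma$. Phase II: once $Z_\gamma=\emptyset$, continuously assign the remaining mass of $o$ to the unsaturated agent(s) liking $o$ with smallest current degree, regardless of class, until $o$ is fully assigned or all agents liking $o$ are saturated. *)

theory Defs
  imports Complex_Main
begin

text \<open>Instance: agents N (type 'a), items M (type 'it), edges E \<subseteq> M \<times> N,
  class map cl assigning each agent its class (type 'c); the classes are the
  nonempty fibres of cl on N.\<close>

definition deg :: "'it set \<Rightarrow> ('it \<Rightarrow> 'a \<Rightarrow> real) \<Rightarrow> 'a \<Rightarrow> real" where
  "deg M X a = (\<Sum>it\<in>M. X it a)"

definition likers :: "'a set \<Rightarrow> ('it \<times> 'a) set \<Rightarrow> 'it \<Rightarrow> 'a set" where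
  "likers N E it = {a\<in>N. (it, a) \<in> E}"

definition Vcls :: "'a set \<Rightarrow> 'it set \<Rightarrow> ('a \<Rightarrow> 'c) \<Rightarrow> 'c \<Rightarrow> ('it \<Rightarrow> 'a \<Rightarrow> real) \<Rightarrow> real" where
  "Vcls N M cl i X = (\<Sum>a\<in>{a\<in>N. cl a = i}. \<Sum>it\<in>M. X it a)"

definition yvec :: "'a set \<Rightarrow> ('a \<Rightarrow> 'c) \<Rightarrow> 'c \<Rightarrow> ('it \<Rightarrow> 'a \<Rightarrow> real) \<Rightarrow> 'it \<Rightarrow> real" where
  "yvec N cl j X it = (\<Sum>a\<in>{a\<in>N. cl a = j}. X it a)"

definition feasible_cls :: "'a set \<Rightarrow> 'it set \<Rightarrow> ('it \<times> 'a) set \<Rightarrow> ('a \<Rightarrow> 'c) \<Rightarrow> 'c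
    \<Rightarrow> ('it \<Rightarrow> real) \<Rightarrow> ('it \<Rightarrow> 'a \<Rightarrow> real) \<Rightarrow> bool" where
  "feasible_cls N M E cl i y x \<longleftrightarrow>
     (\<forall>it a. 0 \<le> x it a) \<and>
     (\<forall>it a. x it a \<noteq> 0 \<longrightarrow> it \<in> M \<and> a \<in> N \<and> cl a = i \<and> (it, a) \<in> E) \<and>
     (\<forall>it\<in>M. (\<Sum>a\<in>{a\<in>N. cl a = i}. x it a) \<le> y it) \<and>
     (\<forall>a\<in>{a\<in>N. cl a = i}. (\<Sum>it\<in>M. x it a) \<le> 1)"

text \<open>V_i^*(y): maximum size of such a fractional matching (the set of sizes is
  nonempty, bounded and its supremum is attained).\<close>
definition Vstar :: "'a set \<Rightarrow> 'it set \<Rightarrow> ('it \<times> 'a) set \<Rightarrow> ('a \<Rightarrow> 'c) \<Rightarrow> 'c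
    \<Rightarrow> ('it \<Rightarrow> real) \<Rightarrow> real" where
  "Vstar N M E cl i y =
     Sup {(\<Sum>a\<in>{a\<in>N. cl a = i}. \<Sum>it\<in>M. x it a) | x. feasible_cls N M E cl i y x}"

text \<open>One arrival step of EFTT with threshold g: item it arrives with current
  matching X; X' is the matching after it has been processed.
  q = mass of it given in Phase I, r = mass given in Phase II.
  The continuous water-filling is described by its (unique) outcome:
  Phase I: each class c receives Q c = min (cap c) t for a common share t
   (equal splitting, classes leave Z once their agents liking it reach g),
   total min 1 (total capacity to level g); inside a class, water-filling
   (every receiving agent ends at a level \<le> g and \<le> the final level of every
   other agent of its class liking it).
  Phase II: remaining mass water-filled over all agents liking it up to level 1.\<close>
definition eftt_step :: "'a set \<Rightarrow> 'it set \<Rightarrow> ('it \<times> 'a) set \<Rightarrow> ('a \<Rightarrow> 'c) \<Rightarrow> real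
    \<Rightarrow> ('it \<Rightarrow> 'a \<Rightarrow> real) \<Rightarrow> 'it \<Rightarrow> ('it \<Rightarrow> 'a \<Rightarrow> real) \<Rightarrow> bool" where
  "eftt_step N M E cl g X it X' \<longleftrightarrow>
    (let A = likers N E it; d = deg M X;
         cap = (\<lambda>c. \<Sum>a\<in>{a\<in>A. cl a = c}. max 0 (g - d a));
         totcap = (\<Sum>a\<in>A. max 0 (g - d a))
     in \<exists>q r :: 'a \<Rightarrow> real.
        (\<forall>a. a \<notin> A \<longrightarrow> q a = 0 \<and> r a = 0) \<and>
        (\<forall>a\<in>A. 0 \<le> q a \<and> 0 \<le> r a) \<and>
        \<comment> \<open>Phase I\<close>
        (\<forall>a\<in>A. 0 < q a \<longrightarrow> d a + q a \<le> g \<and>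
                 (\<forall>b\<in>A. cl b = cl a \<longrightarrow> d a + q a \<le> d b + q b)) \<and>
        (\<forall>c. (\<Sum>a\<in>{a\<in>A. cl a = c}. q a) \<le> cap c) \<and>
        (\<forall>c\<in>cl ` A. \<forall>c'\<in>cl ` A. (\<Sum>a\<in>{a\<in>A. cl a = c}. q a) < cap c \<longrightarrow>
              (\<Sum>a\<in>{a\<in>A. cl a = c'}. q a) \<le> (\<Sum>a\<in>{a\<in>A. cl a = c}. q a)) \<and>
        (\<Sum>a\<in>A. q a) = min 1 totcap \<and>
        \<comment> \<open>Phase II\<close>
        (\<forall>a\<in>A. 0 < r a \<longrightarrow> d a + q a + r a \<le> 1 \<and>
                 (\<forall>b\<in>A. d a + q a + r a \<le> d b + q b + r b)) \<and>
        (\<Sum>a\<in>A. r a) = min (1 - min 1 totcap) (\<Sum>a\<in>A. max 0 (1 - (d a + q a))) \<and>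
        X' = (\<lambda>it' a. if it' = it then q a + r a else X it' a))"

inductive eftt_run :: "'a set \<Rightarrow> 'it set \<Rightarrow> ('it \<times> 'a) set \<Rightarrow> ('a \<Rightarrow> 'c) \<Rightarrow> real
    \<Rightarrow> 'it list \<Rightarrow> ('it \<Rightarrow> 'a \<Rightarrow> real) \<Rightarrow> bool"
  for N M E cl g where
  Nil: "eftt_run N M E cl g [] (\<lambda>it a. 0)"
| Snoc: "eftt_run N M E cl g os X \<Longrightarrow> eftt_step N M E cl g X it X'
          \<Longrightarrow> eftt_run N M E cl g (os @ [it]) X'"

end

theory Submission
  imports Defs
begin

text \<open>Online primal-dual argument. Let \<open>\<Psi>(t) = min 1 ((e^t - 1) / (e^\<gamma> - 1))\<close>
  (\<open>eftt_psi\<close>) and let \<open>F\<close> (\<open>eftt_potential\<close>) be the primitive of \<open>1 - \<Psi>\<close> on \<open>[0, \<gamma>]\<close>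
  with \<open>F(0) = 0\<close>. A class-\<open>i\<close> agent \<open>a\<close> gets the dual value \<open>\<Psi>(deg a)\<close>; an item \<open>o\<close> gets
  the price \<open>1 - \<Psi>(m)\<close> (\<open>dual_price\<close>), where \<open>m\<close> is the least degree, right after \<open>o\<close> is
  processed, of a class-\<open>i\<close> agent liking \<open>o\<close>. Degrees only grow, so this is feasible for the
  dual of the linear program defining \<open>V\<^sub>i\<^sup>*(y\<^sub>j)\<close>.
  A positive price means that some class-\<open>i\<close> agent liking \<open>o\<close> stays below \<open>\<gamma>\<close>: then \<open>o\<close> was
  used up in Phase I, class \<open>i\<close> received at least as much of \<open>o\<close> as class \<open>j\<close>, and the
  class-\<open>i\<close> recipients were filled to the common level \<open>m\<close>. As \<open>1 - \<Psi>\<close> is decreasing,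
  \<open>y\<^sub>j(o)\<close> times the price is at most the growth of the sum of \<open>F(min (deg a) \<gamma>)\<close> over
  class \<open>i\<close>. Finally \<open>\<Psi>(t) + F(min t \<gamma>) \<le> t / (1 - e^-\<gamma>)\<close>, and weak duality concludes.\<close>

definition eftt_psi :: "real \<Rightarrow> real \<Rightarrow> real" where
  "eftt_psi g t = min 1 ((exp t - 1) / (exp g - 1))"

definition eftt_potential :: "real \<Rightarrow> real \<Rightarrow> real" where
  "eftt_potential g t = t - (exp t - 1 - t) / (exp g - 1)"

lemma eftt_psi_mono: "0 < g \<Longrightarrow> t \<le> s \<Longrightarrow> eftt_psi g t \<le> eftt_psi g s"
  unfolding eftt_psi_def using exp_gt_one[of g]
  by (intro min.mono) (auto intro!: divide_right_mono)

lemma eftt_psi_nonneg: "0 < g \<Longrightarrow> 0 \<le> t \<Longrightarrow> 0 \<le> eftt_psi g t"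
  unfolding eftt_psi_def using exp_gt_one[of g] by auto

lemma eftt_psi_le_one: "eftt_psi g t \<le> 1"
  unfolding eftt_psi_def by simp

lemma eftt_psi_eq_one: "0 < g \<Longrightarrow> g \<le> t \<Longrightarrow> eftt_psi g t = 1"
  unfolding eftt_psi_def using exp_gt_one[of g] by (auto simp: min_def field_simps)

lemma eftt_psi_below: "0 < g \<Longrightarrow> t \<le> g \<Longrightarrow> eftt_psi g t = (exp t - 1) / (exp g - 1)"
  unfolding eftt_psi_def using exp_gt_one[of g] by (auto simp: min_def field_simps)

lemma eftt_potential_diff_ge:
  assumes "0 < g" "p \<le> m" "m \<le> g"
  shows "(m - p) * (1 - eftt_psi g m) \<le> eftt_potential g m - eftt_potential g p"
proof -
  have "1 - (m - p) \<le> exp (p - m)"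
    using exp_ge_add_one_self[of "p - m"] by linarith
  then have "exp m * (1 - (m - p)) \<le> exp m * exp (p - m)"
    by (intro mult_left_mono) auto
  then have "exp m - exp p - (m - p) \<le> (m - p) * (exp m - 1)"
    by (simp add: exp_diff algebra_simps)
  then have "(exp m - exp p - (m - p)) / (exp g - 1) \<le> (m - p) * (exp m - 1) / (exp g - 1)"
    using exp_gt_one[OF \<open>0 < g\<close>] by (intro divide_right_mono) auto
  moreover have "(m - p) * (1 - eftt_psi g m) = (m - p) - (m - p) * (exp m - 1) / (exp g - 1)"
    unfolding eftt_psi_below[OF assms(1,3)] by (simp add: algebra_simps)
  moreover have "eftt_potential g m - eftt_potential g p
      = (m - p) - (exp m - exp p - (m - p)) / (exp g - 1)"
    unfolding eftt_potential_def by (simp add: diff_divide_distrib)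
  ultimately show ?thesis by linarith
qed

lemma eftt_potential_mono: "0 < g \<Longrightarrow> p \<le> m \<Longrightarrow> m \<le> g \<Longrightarrow> eftt_potential g p \<le> eftt_potential g m"
  using eftt_potential_diff_ge[of g p m] eftt_psi_le_one[of g m]
    mult_nonneg_nonneg[of "m - p" "1 - eftt_psi g m"] by linarith

lemma eftt_potential_min_mono:
  "0 < g \<Longrightarrow> s \<le> t \<Longrightarrow> eftt_potential g (min s g) \<le> eftt_potential g (min t g)"
  by (intro eftt_potential_mono) auto

lemma eftt_psi_plus_potential_le:
  assumes "0 < g" "0 \<le> t"
  shows "eftt_psi g t + eftt_potential g (min t g) \<le> t / (1 - exp (- g))"
proof -
  have E: "0 < exp g - 1" using exp_gt_one[OF \<open>0 < g\<close>] by simp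
  have ratio: "t / (1 - exp (- g)) = t * exp g / (exp g - 1)"
    using E by (simp add: exp_minus field_simps)
  have sum_below: "eftt_psi g s + eftt_potential g s = s * exp g / (exp g - 1)" if "s \<le> g" for s
  proof -
    have "eftt_psi g s + eftt_potential g s = s + s / (exp g - 1)"
      unfolding eftt_psi_below[OF \<open>0 < g\<close> that] eftt_potential_def
      by (simp add: diff_divide_distrib)
    also have "\<dots> = s * exp g / (exp g - 1)"
      using E by (simp add: field_simps)
    finally show ?thesis .
  qed
  show ?thesis
  proof (cases "t \<le> g")
    case True
    then show ?thesis using sum_below ratio by simp
  next
    case False
    then have "eftt_psi g t + eftt_potential g (min t g) = g * exp g / (exp g - 1)"
      using eftt_psi_eq_one[OF \<open>0 < g\<close>] sum_below[of g] by simp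
    also have "\<dots> \<le> t * exp g / (exp g - 1)"
      using False E by (intro divide_right_mono mult_right_mono) auto
    finally show ?thesis using ratio by simp
  qed
qed

lemma feasible_cls_le_dual:
  assumes "finite N" "finite M" and feas: "feasible_cls N M E cl i y x"
    and alpha: "\<forall>a. 0 \<le> \<alpha> a" and beta: "\<forall>it. 0 \<le> \<beta> it"
    and cover: "\<forall>it\<in>M. \<forall>a\<in>N. cl a = i \<longrightarrow> (it, a) \<in> E \<longrightarrow> 1 \<le> \<alpha> a + \<beta> it"
  shows "(\<Sum>a\<in>{a\<in>N. cl a = i}. \<Sum>it\<in>M. x it a)
     \<le> (\<Sum>a\<in>{a\<in>N. cl a = i}. \<alpha> a) + (\<Sum>it\<in>M. \<beta> it * y it)"
proof -
  let ?Ni = "{a\<in>N. cl a = i}"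
  have x_nonneg: "0 \<le> x it a" for it a
    using feas unfolding feasible_cls_def by auto
  have x_edge: "it \<in> M \<and> a \<in> N \<and> cl a = i \<and> (it, a) \<in> E" if "x it a \<noteq> 0" for it a
    using feas that unfolding feasible_cls_def by auto
  have "(\<Sum>a\<in>?Ni. \<Sum>it\<in>M. x it a) \<le> (\<Sum>a\<in>?Ni. \<Sum>it\<in>M. \<alpha> a * x it a + \<beta> it * x it a)"
  proof (intro sum_mono)
    fix a it
    show "x it a \<le> \<alpha> a * x it a + \<beta> it * x it a"
    proof (cases "x it a = 0")
      case False
      then have "1 * x it a \<le> (\<alpha> a + \<beta> it) * x it a"
        using x_edge[OF False] cover x_nonneg by (intro mult_right_mono) auto
      then show ?thesis by (simp add: algebra_simps)
    qed simp
  qed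
  also have "\<dots> = (\<Sum>a\<in>?Ni. \<alpha> a * (\<Sum>it\<in>M. x it a)) + (\<Sum>it\<in>M. \<beta> it * (\<Sum>a\<in>?Ni. x it a))"
    by (simp add: sum.distrib sum_distrib_left sum.swap[of _ ?Ni M])
  also have "\<dots> \<le> (\<Sum>a\<in>?Ni. \<alpha> a * 1) + (\<Sum>it\<in>M. \<beta> it * y it)"
    using alpha beta feas unfolding feasible_cls_def
    by (intro add_mono sum_mono mult_left_mono) auto
  finally show ?thesis by simp
qed

lemma Vstar_le_dual:
  assumes "finite N" "finite M" and y_nonneg: "\<forall>it\<in>M. 0 \<le> y it"
    and "\<forall>a. 0 \<le> \<alpha> a" "\<forall>it. 0 \<le> \<beta> it"
    and "\<forall>it\<in>M. \<forall>a\<in>N. cl a = i \<longrightarrow> (it, a) \<in> E \<longrightarrow> 1 \<le> \<alpha> a + \<beta> it"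
  shows "Vstar N M E cl i y \<le> (\<Sum>a\<in>{a\<in>N. cl a = i}. \<alpha> a) + (\<Sum>it\<in>M. \<beta> it * y it)"
proof -
  have "feasible_cls N M E cl i y (\<lambda>_ _. 0)"
    using y_nonneg unfolding feasible_cls_def by simp
  then show ?thesis
    unfolding Vstar_def using feasible_cls_le_dual[OF assms(1,2) _ assms(4-6)]
    by (intro cSup_least) auto
qed

definition eftt_alloc :: "'a set \<Rightarrow> ('a \<Rightarrow> 'c) \<Rightarrow> real \<Rightarrow> ('a \<Rightarrow> real)
    \<Rightarrow> ('a \<Rightarrow> real) \<Rightarrow> ('a \<Rightarrow> real) \<Rightarrow> bool" where
  "eftt_alloc A cl g d q r \<longleftrightarrow>
    (let cap = (\<lambda>c. \<Sum>a\<in>{a\<in>A. cl a = c}. max 0 (g - d a));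
         totcap = (\<Sum>a\<in>A. max 0 (g - d a))
     in (\<forall>a. a \<notin> A \<longrightarrow> q a = 0 \<and> r a = 0) \<and>
        (\<forall>a\<in>A. 0 \<le> q a \<and> 0 \<le> r a) \<and>
        (\<forall>a\<in>A. 0 < q a \<longrightarrow> d a + q a \<le> g \<and>
                 (\<forall>b\<in>A. cl b = cl a \<longrightarrow> d a + q a \<le> d b + q b)) \<and>
        (\<forall>c. (\<Sum>a\<in>{a\<in>A. cl a = c}. q a) \<le> cap c) \<and>
        (\<forall>c\<in>cl ` A. \<forall>c'\<in>cl ` A. (\<Sum>a\<in>{a\<in>A. cl a = c}. q a) < cap c \<longrightarrow>
              (\<Sum>a\<in>{a\<in>A. cl a = c'}. q a) \<le> (\<Sum>a\<in>{a\<in>A. cl a = c}. q a)) \<and>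
        (\<Sum>a\<in>A. q a) = min 1 totcap \<and>
        (\<forall>a\<in>A. 0 < r a \<longrightarrow> d a + q a + r a \<le> 1 \<and>
                 (\<forall>b\<in>A. d a + q a + r a \<le> d b + q b + r b)) \<and>
        (\<Sum>a\<in>A. r a) = min (1 - min 1 totcap) (\<Sum>a\<in>A. max 0 (1 - (d a + q a))))"

lemma eftt_stepE:
  assumes "eftt_step N M E cl g X it X'"
  obtains q r where "eftt_alloc (likers N E it) cl g (deg M X) q r"
    and "X' = (\<lambda>it' a. if it' = it then q a + r a else X it' a)"
  using assms unfolding eftt_step_def eftt_alloc_def Let_def by blast

lemma eftt_alloc_nonneg:
  assumes "eftt_alloc A cl g d q r"
  shows "0 \<le> q a" and "0 \<le> r a"
  using assms unfolding eftt_alloc_def Let_def by (cases "a \<in> A"; auto)+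

lemma eftt_alloc_unsaturated:
  assumes alloc: "eftt_alloc A cl g d q r" and "finite A"
    and a0: "a0 \<in> A" "d a0 + q a0 + r a0 < g"
  shows "\<forall>a. r a = 0"
    and "(\<Sum>a\<in>{a\<in>A. cl a = c}. q a) \<le> (\<Sum>a\<in>{a\<in>A. cl a = cl a0}. q a)"
proof -
  let ?cap = "\<lambda>a. max 0 (g - d a)"
  let ?A0 = "{a\<in>A. cl a = cl a0}"
  have outside: "\<forall>a. a \<notin> A \<longrightarrow> q a = 0 \<and> r a = 0"
    and level: "\<forall>a\<in>A. 0 < q a \<longrightarrow> d a + q a \<le> g"
    and equal: "\<forall>c\<in>cl ` A. \<forall>c'\<in>cl ` A. (\<Sum>a\<in>{a\<in>A. cl a = c}. q a) < (\<Sum>a\<in>{a\<in>A. cl a = c}. ?cap a)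
              \<longrightarrow> (\<Sum>a\<in>{a\<in>A. cl a = c'}. q a) \<le> (\<Sum>a\<in>{a\<in>A. cl a = c}. q a)"
    and total: "(\<Sum>a\<in>A. q a) = min 1 (\<Sum>a\<in>A. ?cap a)"
    and phase2: "(\<Sum>a\<in>A. r a) = min (1 - min 1 (\<Sum>a\<in>A. ?cap a)) (\<Sum>a\<in>A. max 0 (1 - (d a + q a)))"
    using alloc unfolding eftt_alloc_def Let_def by blast+
  note nonneg = eftt_alloc_nonneg[OF alloc]
  have q_le_cap: "q a \<le> ?cap a" if "a \<in> A" for a
    using level that nonneg[of a] by (cases "0 < q a") auto
  have q_lt_cap: "q a0 < ?cap a0"
    using a0 nonneg(2)[of a0] by auto
  have "(\<Sum>a\<in>A. q a) < (\<Sum>a\<in>A. ?cap a)"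
    using sum_strict_mono_ex1[OF \<open>finite A\<close>, of q ?cap] q_le_cap q_lt_cap a0(1) by blast
  then have "min 1 (\<Sum>a\<in>A. ?cap a) = 1"
    using total by linarith
  moreover have "0 \<le> (\<Sum>a\<in>A. max 0 (1 - (d a + q a)))"
    by (intro sum_nonneg) auto
  ultimately have "(\<Sum>a\<in>A. r a) = 0"
    using phase2 by simp
  then have "\<forall>a\<in>A. r a = 0"
    using sum_nonneg_eq_0_iff[OF \<open>finite A\<close>] nonneg(2) by blast
  then show "\<forall>a. r a = 0"
    using outside by blast
  have "finite ?A0" using \<open>finite A\<close> by simp
  then have "(\<Sum>a\<in>?A0. q a) < (\<Sum>a\<in>?A0. ?cap a)"
    using sum_strict_mono_ex1[of ?A0 q ?cap] q_le_cap q_lt_cap a0(1) by auto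
  then show "(\<Sum>a\<in>{a\<in>A. cl a = c}. q a) \<le> (\<Sum>a\<in>?A0. q a)"
  proof (cases "c \<in> cl ` A")
    case True
    then show ?thesis
      using equal \<open>(\<Sum>a\<in>?A0. q a) < _\<close> imageI[OF a0(1), of cl] by blast
  next
    case False
    then have "(\<Sum>a\<in>{a\<in>A. cl a = c}. q a) = 0"
      by (metis (mono_tags, lifting) imageI mem_Collect_eq sum.neutral)
    then show ?thesis
      using nonneg(1) by (simp add: sum_nonneg)
  qed
qed

definition dual_price :: "real \<Rightarrow> ('a \<Rightarrow> real) \<Rightarrow> 'a set \<Rightarrow> real" where
  "dual_price g d B = (if B = {} then 0 else 1 - eftt_psi g (Min (d ` B)))"

lemma dual_price_nonneg: "0 \<le> dual_price g d B"
  unfolding dual_price_def using eftt_psi_le_one by simp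

lemma dual_price_covers:
  assumes "0 < g" "finite B" "a \<in> B"
  shows "1 \<le> eftt_psi g (d a) + dual_price g d B"
proof -
  have "eftt_psi g (Min (d ` B)) \<le> eftt_psi g (d a)"
    using assms by (intro eftt_psi_mono) auto
  then show ?thesis
    unfolding dual_price_def using assms(3) by auto
qed

lemma eftt_alloc_charge_le:
  assumes alloc: "eftt_alloc A cl g d q r" and "finite A" "0 < g"
  defines "d' \<equiv> \<lambda>a. d a + q a + r a"
  assumes "a0 \<in> A" "d' a0 < g" and least: "\<forall>a\<in>A. cl a = cl a0 \<longrightarrow> d' a0 \<le> d' a"
  shows "(\<Sum>a\<in>{a\<in>A. cl a = j}. q a + r a) * (1 - eftt_psi g (d' a0))
       \<le> (\<Sum>a\<in>{a\<in>A. cl a = cl a0}. eftt_potential g (min (d' a) g) - eftt_potential g (min (d a) g))"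
proof -
  let ?m = "d' a0"
  let ?B = "{a\<in>A. cl a = cl a0}"
  note nonneg = eftt_alloc_nonneg[OF alloc]
  have r0: "\<forall>a. r a = 0"
    and class_share: "(\<Sum>a\<in>{a\<in>A. cl a = j}. q a) \<le> (\<Sum>a\<in>?B. q a)"
    using eftt_alloc_unsaturated[OF alloc \<open>finite A\<close> \<open>a0 \<in> A\<close>] \<open>?m < g\<close>
    unfolding d'_def by auto
  have filled: "q a * (1 - eftt_psi g ?m)
      \<le> eftt_potential g (min (d' a) g) - eftt_potential g (min (d a) g)" if "a \<in> ?B" for a
  proof (cases "0 < q a")
    case True
    then have "d a + q a \<le> d a0 + q a0"
      using alloc that \<open>a0 \<in> A\<close> unfolding eftt_alloc_def Let_def by auto
    then have q_a: "q a = ?m - d a" and "d a \<le> ?m" "min (d' a) g = ?m"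
      using least that r0 nonneg(1)[of a] \<open>?m < g\<close> unfolding d'_def by force+
    then show ?thesis
      unfolding q_a using eftt_potential_diff_ge[OF \<open>0 < g\<close>, of "d a" ?m] \<open>?m < g\<close>
      by (simp add: min_def)
  next
    case False
    then show ?thesis
      using nonneg(1)[of a] r0 unfolding d'_def by simp
  qed
  have "(\<Sum>a\<in>{a\<in>A. cl a = j}. q a + r a) * (1 - eftt_psi g ?m)
      \<le> (\<Sum>a\<in>?B. q a) * (1 - eftt_psi g ?m)"
    using class_share r0 eftt_psi_le_one[of g ?m] by (intro mult_right_mono) auto
  also have "\<dots> \<le> (\<Sum>a\<in>?B. eftt_potential g (min (d' a) g) - eftt_potential g (min (d a) g))"
    unfolding sum_distrib_right using filled by (intro sum_mono)
  finally show ?thesis .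
qed

lemma eftt_alloc_price_bound:
  fixes i :: 'c
  assumes alloc: "eftt_alloc A cl g d q r" and "finite A" "0 < g"
  defines "d' \<equiv> \<lambda>a. d a + q a + r a" and "B \<equiv> {a\<in>A. cl a = i}"
  shows "(\<Sum>a\<in>{a\<in>A. cl a = j}. q a + r a) * dual_price g d' B
       \<le> (\<Sum>a\<in>B. eftt_potential g (min (d' a) g) - eftt_potential g (min (d a) g))"
proof (cases "B = {} \<or> g \<le> Min (d' ` B)")
  case True
  then have "dual_price g d' B = 0"
    unfolding dual_price_def using eftt_psi_eq_one[OF \<open>0 < g\<close>] by auto
  moreover have "eftt_potential g (min (d a) g) \<le> eftt_potential g (min (d' a) g)" for a
    using eftt_potential_min_mono[OF \<open>0 < g\<close>] eftt_alloc_nonneg[OF alloc, of a]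
    unfolding d'_def by simp
  ultimately show ?thesis
    by (simp add: sum_nonneg)
next
  case False
  have "finite B"
    using \<open>finite A\<close> unfolding B_def by simp
  then have "Min (d' ` B) \<in> d' ` B"
    using False by (intro Min_in) auto
  then obtain a0 where a0: "a0 \<in> B" "d' a0 = Min (d' ` B)"
    by auto
  then have "B = {a\<in>A. cl a = cl a0}" "a0 \<in> A" "\<forall>a\<in>B. d' a0 \<le> d' a"
    using \<open>finite B\<close> unfolding B_def by auto
  then show ?thesis
    using eftt_alloc_charge_le[OF alloc \<open>finite A\<close> \<open>0 < g\<close>, of a0 j] a0 False
    unfolding dual_price_def d'_def by auto
qed

lemma deg_update_item:
  assumes "finite M" "it \<in> M" "X it a = 0"
  shows "deg M (\<lambda>it' a. if it' = it then v a else X it' a) a = deg M X a + v a"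
proof -
  have "(\<Sum>it'\<in>M - {it}. if it' = it then v a else X it' a) = (\<Sum>it'\<in>M - {it}. X it' a)"
    by (rule sum.cong) auto
  then have "deg M (\<lambda>it' a. if it' = it then v a else X it' a) a = v a + (\<Sum>it'\<in>M - {it}. X it' a)"
    unfolding deg_def using sum.remove[OF assms(1,2), of "\<lambda>it'. if it' = it then v a else X it' a"]
    by simp
  moreover have "deg M X a = (\<Sum>it'\<in>M - {it}. X it' a)"
    unfolding deg_def using sum.remove[OF assms(1,2), of "\<lambda>it'. X it' a"] assms(3) by simp
  ultimately show ?thesis by simp
qed

lemma eftt_step_other_item:
  "eftt_step N M E cl g X it X' \<Longrightarrow> it' \<noteq> it \<Longrightarrow> X' it' = X it'"
  by (erule eftt_stepE) simp

lemma eftt_run_unassigned: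
  "eftt_run N M E cl g os X \<Longrightarrow> it \<notin> set os \<Longrightarrow> X it a = 0"
proof (induction rule: eftt_run.induct)
  case (Snoc os X it' X')
  then show ?case
    using eftt_step_other_item[OF Snoc.hyps(2), of it] by simp
qed simp

lemma eftt_run_nonneg:
  "eftt_run N M E cl g os X \<Longrightarrow> 0 \<le> X it a"
proof (induction arbitrary: it rule: eftt_run.induct)
  case (Snoc os X it' X')
  obtain q r where alloc: "eftt_alloc (likers N E it') cl g (deg M X) q r"
    and X': "X' = (\<lambda>it'' a. if it'' = it' then q a + r a else X it'' a)"
    using Snoc.hyps(2) by (rule eftt_stepE)
  show ?case
    unfolding X' using Snoc.IH eftt_alloc_nonneg[OF alloc] by simp
qed simp

lemma eftt_step_dual_increment:
  fixes i j :: 'c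
  assumes step: "eftt_step N M E cl g X it X'" and "finite N" "finite M" "0 < g" "it \<in> M"
    and fresh: "\<forall>a. X it a = 0"
  shows "\<forall>a. deg M X a \<le> deg M X' a"
    and "\<exists>b\<ge>0. (\<forall>a\<in>N. cl a = i \<longrightarrow> (it, a) \<in> E \<longrightarrow> 1 \<le> eftt_psi g (deg M X' a) + b) \<and>
          yvec N cl j X' it * b
            \<le> (\<Sum>a\<in>{a\<in>N. cl a = i}. eftt_potential g (min (deg M X' a) g)
                                     - eftt_potential g (min (deg M X a) g))"
proof -
  let ?A = "likers N E it"
  let ?B = "{a\<in>?A. cl a = i}"
  obtain q r where alloc: "eftt_alloc ?A cl g (deg M X) q r"
    and X': "X' = (\<lambda>it' a. if it' = it then q a + r a else X it' a)"
    using step by (rule eftt_stepE)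
  have "?A \<subseteq> N" "finite ?A"
    using \<open>finite N\<close> unfolding likers_def by auto
  have outside: "\<forall>a. a \<notin> ?A \<longrightarrow> q a = 0 \<and> r a = 0"
    using alloc unfolding eftt_alloc_def Let_def by blast
  have deg': "deg M X' = (\<lambda>a. deg M X a + q a + r a)"
    unfolding X' using deg_update_item[OF \<open>finite M\<close> \<open>it \<in> M\<close>, of X _ "\<lambda>a. q a + r a"] fresh
    by (auto simp: add.assoc)
  then show "\<forall>a. deg M X a \<le> deg M X' a"
    using eftt_alloc_nonneg[OF alloc] by simp
  let ?b = "dual_price g (deg M X') ?B"
  have cover: "\<forall>a\<in>N. cl a = i \<longrightarrow> (it, a) \<in> E \<longrightarrow> 1 \<le> eftt_psi g (deg M X' a) + ?b"
    using \<open>finite N\<close> \<open>0 < g\<close> by (auto intro!: dual_price_covers simp: likers_def)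
  have "yvec N cl j X' it = (\<Sum>a\<in>{a\<in>?A. cl a = j}. q a + r a)"
    unfolding yvec_def X' if_P[OF refl] using \<open>finite N\<close> \<open>?A \<subseteq> N\<close> outside
    by (intro sum.mono_neutral_right) auto
  also have "(\<dots>) * ?b
      \<le> (\<Sum>a\<in>?B. eftt_potential g (min (deg M X' a) g) - eftt_potential g (min (deg M X a) g))"
    using eftt_alloc_price_bound[OF alloc \<open>finite ?A\<close> \<open>0 < g\<close>, where i=i and j=j]
    unfolding deg' .
  also have "\<dots> = (\<Sum>a\<in>{a\<in>N. cl a = i}. eftt_potential g (min (deg M X' a) g)
                                     - eftt_potential g (min (deg M X a) g))"
    unfolding deg' using \<open>finite N\<close> \<open>?A \<subseteq> N\<close> outside
    by (intro sum.mono_neutral_left) auto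
  finally show "\<exists>b\<ge>0. (\<forall>a\<in>N. cl a = i \<longrightarrow> (it, a) \<in> E \<longrightarrow> 1 \<le> eftt_psi g (deg M X' a) + b) \<and>
          yvec N cl j X' it * b
            \<le> (\<Sum>a\<in>{a\<in>N. cl a = i}. eftt_potential g (min (deg M X' a) g)
                                     - eftt_potential g (min (deg M X a) g))"
    using cover dual_price_nonneg by blast
qed

lemma eftt_run_dual_certificate:
  fixes i j :: 'c
  assumes "eftt_run N M E cl g os X" "finite N" "finite M" "0 < g" "distinct os" "set os \<subseteq> M"
  shows "\<exists>\<beta>. (\<forall>it. 0 \<le> \<beta> it) \<and>
      (\<forall>it\<in>set os. \<forall>a\<in>N. cl a = i \<longrightarrow> (it, a) \<in> E \<longrightarrow> 1 \<le> eftt_psi g (deg M X a) + \<beta> it) \<and>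
      (\<Sum>it\<in>set os. yvec N cl j X it * \<beta> it)
        \<le> (\<Sum>a\<in>{a\<in>N. cl a = i}. eftt_potential g (min (deg M X a) g))"
  using assms
proof (induction rule: eftt_run.induct)
  case Nil
  then show ?case
    by (intro exI[of _ "\<lambda>_. 0"]) (simp add: deg_def eftt_potential_def)
next
  case (Snoc os X it X')
  then have "it \<notin> set os" "it \<in> M" "distinct os" "set os \<subseteq> M"
    by auto
  then obtain \<beta> where \<beta>_nonneg: "\<forall>it. 0 \<le> \<beta> it"
    and cover: "\<forall>it\<in>set os. \<forall>a\<in>N. cl a = i \<longrightarrow> (it, a) \<in> E \<longrightarrow> 1 \<le> eftt_psi g (deg M X a) + \<beta> it"
    and charged: "(\<Sum>it\<in>set os. yvec N cl j X it * \<beta> it)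
        \<le> (\<Sum>a\<in>{a\<in>N. cl a = i}. eftt_potential g (min (deg M X a) g))"
    using Snoc.IH Snoc.prems by blast
  have fresh: "\<forall>a. X it a = 0"
    using eftt_run_unassigned[OF Snoc.hyps(1) \<open>it \<notin> set os\<close>] by blast
  note increment = eftt_step_dual_increment[OF Snoc.hyps(2) Snoc.prems(1-3) \<open>it \<in> M\<close> fresh]
  obtain b where "0 \<le> b"
    and cover_it: "\<forall>a\<in>N. cl a = i \<longrightarrow> (it, a) \<in> E \<longrightarrow> 1 \<le> eftt_psi g (deg M X' a) + b"
    and charged_it: "yvec N cl j X' it * b
        \<le> (\<Sum>a\<in>{a\<in>N. cl a = i}. eftt_potential g (min (deg M X' a) g)
                                 - eftt_potential g (min (deg M X a) g))"
    using increment(2)[where i=i and j=j] by blast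
  have "yvec N cl j X' it' = yvec N cl j X it'" if "it' \<in> set os" for it'
    using that \<open>it \<notin> set os\<close> eftt_step_other_item[OF Snoc.hyps(2)] unfolding yvec_def by metis
  then have "(\<Sum>it'\<in>set (os @ [it]). yvec N cl j X' it' * (\<beta>(it := b)) it')
      = yvec N cl j X' it * b + (\<Sum>it'\<in>set os. yvec N cl j X it' * \<beta> it')"
    using \<open>it \<notin> set os\<close> by (auto intro!: sum.cong)
  also have "\<dots> \<le> (\<Sum>a\<in>{a\<in>N. cl a = i}. eftt_potential g (min (deg M X' a) g))"
    using add_mono[OF charged_it charged] by (simp add: sum_subtractf)
  finally have "(\<Sum>it'\<in>set (os @ [it]). yvec N cl j X' it' * (\<beta>(it := b)) it')
      \<le> (\<Sum>a\<in>{a\<in>N. cl a = i}. eftt_potential g (min (deg M X' a) g))" .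
  moreover have "1 \<le> eftt_psi g (deg M X' a) + \<beta> it'"
    if "it' \<in> set os" "a \<in> N" "cl a = i" "(it', a) \<in> E" for it' a
    using cover that eftt_psi_mono[OF \<open>0 < g\<close> increment(1)[rule_format, of a]] by fastforce
  ultimately show ?case
    using \<beta>_nonneg \<open>0 \<le> b\<close> cover_it \<open>it \<notin> set os\<close>
    by (intro exI[of _ "\<beta>(it := b)"]) auto
qed

lemma eftt_run_Vstar_le:
  assumes run: "eftt_run N M E cl g os X" and "finite N" "finite M" "0 < g"
    and "distinct os" "set os = M"
  shows "Vstar N M E cl i (yvec N cl j X) \<le> Vcls N M cl i X / (1 - exp (- g))"
proof -
  have X_nonneg: "0 \<le> X it a" for it a
    using eftt_run_nonneg[OF run] .
  have deg_nonneg: "0 \<le> deg M X a" for a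
    unfolding deg_def using X_nonneg by (simp add: sum_nonneg)
  obtain \<beta> where "\<forall>it. 0 \<le> \<beta> it"
    and "\<forall>it\<in>M. \<forall>a\<in>N. cl a = i \<longrightarrow> (it, a) \<in> E \<longrightarrow> 1 \<le> eftt_psi g (deg M X a) + \<beta> it"
    and charged: "(\<Sum>it\<in>M. yvec N cl j X it * \<beta> it)
        \<le> (\<Sum>a\<in>{a\<in>N. cl a = i}. eftt_potential g (min (deg M X a) g))"
    using eftt_run_dual_certificate[OF assms(1-5), where i=i and j=j] \<open>set os = M\<close>
    by auto
  then have "Vstar N M E cl i (yvec N cl j X)
      \<le> (\<Sum>a\<in>{a\<in>N. cl a = i}. eftt_psi g (deg M X a)) + (\<Sum>it\<in>M. \<beta> it * yvec N cl j X it)"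
    using X_nonneg deg_nonneg eftt_psi_nonneg[OF \<open>0 < g\<close>]
    by (intro Vstar_le_dual[OF \<open>finite N\<close> \<open>finite M\<close>]) (auto simp: yvec_def sum_nonneg)
  also have "\<dots> \<le> (\<Sum>a\<in>{a\<in>N. cl a = i}. eftt_psi g (deg M X a) + eftt_potential g (min (deg M X a) g))"
    using charged by (simp add: sum.distrib mult.commute)
  also have "\<dots> \<le> (\<Sum>a\<in>{a\<in>N. cl a = i}. deg M X a / (1 - exp (- g)))"
    using eftt_psi_plus_potential_le[OF \<open>0 < g\<close> deg_nonneg] by (intro sum_mono)
  also have "\<dots> = Vcls N M cl i X / (1 - exp (- g))"
    unfolding Vcls_def deg_def by (simp add: sum_divide_distrib)
  finally show ?thesis .
qed

theorem lemma2:
  fixes N :: "'a set" and M :: "'o set" and E :: "('o \<times> 'a) set"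
    and cl :: "'a \<Rightarrow> 'c" and g :: real and os :: "'o list"
    and X :: "'o \<Rightarrow> 'a \<Rightarrow> real"
  assumes "finite N" and "finite M" and "E \<subseteq> M \<times> N"
    and "0 \<le> g" and "g \<le> 1"
    and "distinct os" and "set os = M"
    and "eftt_run N M E cl g os X"
  shows "\<forall>i\<in>cl ` N. \<forall>j\<in>cl ` N.
           Vcls N M cl i X \<ge> (1 - exp (- g)) * Vstar N M E cl i (yvec N cl j X)"
proof (intro ballI)
  fix i j
  show "Vcls N M cl i X \<ge> (1 - exp (- g)) * Vstar N M E cl i (yvec N cl j X)"
  proof (cases "g = 0")
    case True
    then show ?thesis
      unfolding Vcls_def using eftt_run_nonneg[OF assms(8)] by (simp add: sum_nonneg)
  next
    case False
    then have "0 < g"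
      using \<open>0 \<le> g\<close> by simp
    then show ?thesis
      using eftt_run_Vstar_le[OF assms(8,1,2) \<open>0 < g\<close> assms(6,7), where i=i and j=j]
      by (simp add: field_simps)
  qed
qed

end
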